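(* Fix $\alpha\in(0,1]$ and $n\ge1$, and let $\mathcal F_n$, $\mathcal M^*$ and $\hat A$ be as in the context. Suppose that $\hat A$ is measurable and $f\in\mathcal F_n$. Then $f=f\,\mathbf 1_{\hat A}$ $m$-almost everywhere.
   Context: Let $(X,m)$ be a measure space, $A\subsetneq X$ measurable and $T:A\to X$ measurable such that: $H_0:=T(A)\setminus A$ is measurable; $m(A\cap T^{-1}H_0)>0$; $m(E)>0$ whenever $E\subseteq X$ is measurable with $m(T^{-1}E)>0$; and $T$ is locally finite-to-one (a nonsingular open dynamical system). Preimages are taken in $A$; $A_1=A\cap T^{-1}A$; $\mathbf 1_{A_1}\psi\circ T$ is $\psi\circ T$ on $A_1$ and $0$ elsewhere in $A$. Let $\psi_1,\dots,\psi_n\in L^\infty(A;m)$ with $\sum_j\psi_j=\mathbf 1_A$. Let $\mathcal F_n=\{0\le\varphi\in L^1(A;m):\int_{A_1}\varphi\,dm=\alpha,\ \int_A\varphi\,dm=1,\ \int_A[\mathbf 1_{A_1}\psi_j\circ T-\alpha\psi_j]\varphi\,dm=0,\ j=1,\dots,n\}$. Define $\mathcal M^*:\mathbb R^{n+1}\to L^\infty(A;m)$ by $\mathcal M^*\lambda=\lambda_0\mathbf 1_{A_1}+\sum_{j=1}^n\lambda_j(\mathbf 1_{A_1}\psi_j\circ T-\alpha\psi_j)$. The reduced domain $\hat A$ is obtained from $A$ by removing the support $\{\mathcal M^*\lambda\ne0\}$ of every function $\mathcal M^*\lambda$ with $\lambda\in\mathbb R^{n+1}$, $\lambda_0=0$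 and $\mathcal M^*\lambda\le0$ $m$-a.e. *)

theory Defs
  imports "HOL-Analysis.Analysis"
begin

text \<open>A is the domain, T : A -> X; preimages are taken inside A.\<close>

definition A1 :: "'a set \<Rightarrow> ('a \<Rightarrow> 'a) \<Rightarrow> 'a set" where
  "A1 A T = A \<inter> T -` A"

definition locally_finite_to_one :: "'a measure \<Rightarrow> 'a set \<Rightarrow> ('a \<Rightarrow> 'a) \<Rightarrow> bool" where
  "locally_finite_to_one M A T \<longleftrightarrow>
     (\<exists>P::nat \<Rightarrow> 'a set. (\<forall>i. P i \<in> sets M \<and> P i \<subseteq> A) \<and> (\<Union>i. P i) = A \<and>
        (\<forall>i. \<forall>y. finite (P i \<inter> T -` {y})))"

definition open_dyn_system :: "'a measure \<Rightarrow> 'a set \<Rightarrow> ('a \<Rightarrow> 'a) \<Rightarrow> bool" where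
  "open_dyn_system M A T \<longleftrightarrow>
     A \<in> sets M \<and> A \<subset> space M \<and>
     T \<in> measurable (restrict_space M A) M \<and>
     T ` A - A \<in> sets M \<and>
     emeasure M (A \<inter> T -` (T ` A - A)) > 0 \<and>
     (\<forall>E \<in> sets M. emeasure M (A \<inter> T -` E) > 0 \<longrightarrow> emeasure M E > 0) \<and>
     locally_finite_to_one M A T"

definition Linf_on :: "'a measure \<Rightarrow> 'a set \<Rightarrow> ('a \<Rightarrow> real) \<Rightarrow> bool" where
  "Linf_on M A g \<longleftrightarrow> g \<in> borel_measurable (restrict_space M A) \<and>
     (\<exists>C. AE x in M. x \<in> A \<longrightarrow> \<bar>g x\<bar> \<le> C)"

definition Fn :: "'a measure \<Rightarrow> 'a set \<Rightarrow> ('a \<Rightarrow> 'a) \<Rightarrow> (nat \<Rightarrow> 'a \<Rightarrow> real) \<Rightarrow> nat \<Rightarrow> real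
                   \<Rightarrow> ('a \<Rightarrow> real) set" where
  "Fn M A T \<psi> n \<alpha> = {\<phi>. set_integrable M A \<phi> \<and> (AE x in M. x \<in> A \<longrightarrow> 0 \<le> \<phi> x) \<and>
      (LINT x:A1 A T|M. \<phi> x) = \<alpha> \<and> (LINT x:A|M. \<phi> x) = 1 \<and>
      (\<forall>j\<in>{1..n}. (LINT x:A|M. (indicator (A1 A T) x * \<psi> j (T x) - \<alpha> * \<psi> j x) * \<phi> x) = 0)}"

text \<open>The operator M^*; lam 0 is lambda_0, lam 1..n are lambda_1..lambda_n.\<close>
definition Mstar :: "'a set \<Rightarrow> ('a \<Rightarrow> 'a) \<Rightarrow> (nat \<Rightarrow> 'a \<Rightarrow> real) \<Rightarrow> nat \<Rightarrow> real
                     \<Rightarrow> (nat \<Rightarrow> real) \<Rightarrow> 'a \<Rightarrow> real" where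
  "Mstar A T \<psi> n \<alpha> lam x = lam 0 * indicator (A1 A T) x +
      (\<Sum>j=1..n. lam j * (indicator (A1 A T) x * \<psi> j (T x) - \<alpha> * \<psi> j x))"

definition reduced_domain :: "'a measure \<Rightarrow> 'a set \<Rightarrow> ('a \<Rightarrow> 'a) \<Rightarrow> (nat \<Rightarrow> 'a \<Rightarrow> real) \<Rightarrow> nat
                              \<Rightarrow> real \<Rightarrow> 'a set" where
  "reduced_domain M A T \<psi> n \<alpha> = A - (\<Union> {{x \<in> A. Mstar A T \<psi> n \<alpha> lam x \<noteq> 0} | lam.
      lam 0 = 0 \<and> (AE x in M. x \<in> A \<longrightarrow> Mstar A T \<psi> n \<alpha> lam x \<le> 0)})"

end

theory Submission
  imports Defs "HOL-Library.Function_Algebras"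
begin

text \<open>For an admissible multiplier \<open>\<lambda>\<close> (i.e. \<open>\<lambda>\<^sub>0 = 0\<close> and \<open>\<M>\<^sup>*\<lambda> \<le> 0\<close>) the moment constraints
  of \<open>\<F>\<^sub>n\<close> give \<open>\<integral>\<^sub>A (\<M>\<^sup>*\<lambda>) f dm = 0\<close>; as \<open>(\<M>\<^sup>*\<lambda>) f \<le> 0\<close>, \<open>f\<close> vanishes a.e. on the support of
  \<open>\<M>\<^sup>*\<lambda>\<close>. There are uncountably many such \<open>\<lambda>\<close>, but \<open>\<M>\<^sup>*\<lambda>\<close> is linear in \<open>\<lambda> \<in> \<real>\<^sup>n\<^sup>+\<^sup>1\<close>, so
  finitely many admissible \<open>\<lambda>\<close> spanning all of them already cut out the reduced domain, and a
  finite union of null sets is null.\<close>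

lemma A1_in_sets:
  assumes "open_dyn_system M A T"
  shows "A1 A T \<in> sets M"
proof -
  have A: "A \<in> sets M" and T: "T \<in> measurable (restrict_space M A) M"
    using assms unfolding open_dyn_system_def by auto
  have "T -` A \<inter> space (restrict_space M A) \<in> sets (restrict_space M A)"
    using measurable_sets[OF T A] .
  then show ?thesis
    using A by (simp add: sets_restrict_space_iff A1_def Int_commute)
qed

lemma null_sets_preimage:
  assumes "open_dyn_system M A T" and "N \<in> null_sets M"
  shows "A \<inter> T -` N \<in> null_sets M"
proof -
  have A: "A \<in> sets M" and T: "T \<in> measurable (restrict_space M A) M"
    and nonsingular: "\<forall>E \<in> sets M. emeasure M (A \<inter> T -` E) > 0 \<longrightarrow> emeasure M E > 0"
    using assms(1) unfolding open_dyn_system_def by auto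
  have "T -` N \<inter> space (restrict_space M A) \<in> sets (restrict_space M A)"
    using measurable_sets[OF T] assms(2) by auto
  then have "A \<inter> T -` N \<in> sets M"
    using A by (simp add: sets_restrict_space_iff Int_commute)
  moreover have "emeasure M (A \<inter> T -` N) = 0"
    using nonsingular assms(2) by (auto simp: null_sets_def)
  ultimately show ?thesis by auto
qed

lemma AE_comp_on_A1:
  assumes "open_dyn_system M A T" and "AE y in M. y \<in> A \<longrightarrow> P y"
  shows "AE x in M. x \<in> A1 A T \<longrightarrow> P (T x)"
proof -
  have A: "A \<subseteq> space M" and T: "T \<in> measurable (restrict_space M A) M"
    using assms(1) sets.sets_into_space unfolding open_dyn_system_def by auto
  obtain N where N: "{y \<in> space M. \<not> (y \<in> A \<longrightarrow> P y)} \<subseteq> N" "N \<in> null_sets M"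
    using AE_E[OF assms(2)] by (auto simp: null_sets_def)
  have "AE x in M. x \<notin> A \<inter> T -` N"
    using null_sets_preimage[OF assms(1) N(2)] by (rule AE_not_in)
  then show ?thesis
  proof eventually_elim
    case (elim x)
    show ?case
    proof
      assume x: "x \<in> A1 A T"
      then have "T x \<in> space M"
        using measurable_space[OF T] A by (auto simp: A1_def space_restrict_space)
      then show "P (T x)"
        using x elim N(1) by (auto simp: A1_def)
    qed
  qed
qed

lemma borel_measurable_comp_on_A1:
  fixes g :: "'a \<Rightarrow> real"
  assumes "open_dyn_system M A T" and "g \<in> borel_measurable (restrict_space M A)"
  shows "(\<lambda>x. indicator (A1 A T) x * g (T x)) \<in> borel_measurable M"
proof -
  have A1: "A1 A T \<in> sets M" using A1_in_sets[OF assms(1)] .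
  have A: "A \<in> sets M" and T: "T \<in> measurable (restrict_space M A) M"
    using assms(1) unfolding open_dyn_system_def by auto
  have "T \<in> measurable (restrict_space (restrict_space M A) (A1 A T)) (restrict_space M A)"
    by (rule measurable_restrict_space3[OF T]) (auto simp: A1_def)
  moreover have "restrict_space (restrict_space M A) (A1 A T) = restrict_space M (A1 A T)"
    using A1 A by (subst restrict_restrict_space) (auto simp: A1_def Int_absorb1 sets.Int_space_eq2)
  ultimately have "(\<lambda>x. g (T x)) \<in> borel_measurable (restrict_space M (A1 A T))"
    using assms(2) by (auto intro: measurable_compose)
  then show ?thesis
    using A1 by (subst (asm) borel_measurable_restrict_space_iff) (auto simp: sets.Int_space_eq2)
qed

lemma integrable_bounded_mult:
  fixes f g :: "'a \<Rightarrow> real"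
  assumes "integrable M f" and "g \<in> borel_measurable M" and "AE x in M. \<bar>g x\<bar> \<le> C"
  shows "integrable M (\<lambda>x. g x * f x)"
proof (rule Bochner_Integration.integrable_bound)
  show "integrable M (\<lambda>x. \<bar>C\<bar> * f x)" using assms(1) by simp
  show "(\<lambda>x. g x * f x) \<in> borel_measurable M" using assms by measurable
  show "AE x in M. norm (g x * f x) \<le> norm (\<bar>C\<bar> * f x)"
    using assms(3) by eventually_elim (auto simp: abs_mult intro: mult_right_mono)
qed

lemma set_integrable_moment:
  assumes "open_dyn_system M A T" and "Linf_on M A g" and "set_integrable M A (f :: 'a \<Rightarrow> real)"
  shows "set_integrable M A (\<lambda>x. (indicator (A1 A T) x * g (T x) - \<alpha> * g x) * f x)"
proof -
  obtain C where g: "g \<in> borel_measurable (restrict_space M A)"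
    and C: "AE x in M. x \<in> A \<longrightarrow> \<bar>g x\<bar> \<le> C"
    using assms(2) unfolding Linf_on_def by auto
  have A: "A \<in> sets M" using assms(1) unfolding open_dyn_system_def by auto
  define k where "k x = indicator (A1 A T) x * g (T x) - \<alpha> * (indicator A x * g x)" for x
  have fA: "integrable M (\<lambda>x. indicator A x * f x)"
    using assms(3) by (simp add: set_integrable_def)
  have "(\<lambda>x. indicator A x * g x) \<in> borel_measurable M"
    using g A by (subst (asm) borel_measurable_restrict_space_iff) (auto simp: sets.Int_space_eq2)
  then have "k \<in> borel_measurable M"
    using borel_measurable_comp_on_A1[OF assms(1) g] unfolding k_def by measurable
  moreover have "AE x in M. \<bar>k x\<bar> \<le> \<bar>C\<bar> + \<bar>\<alpha>\<bar> * \<bar>C\<bar>"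
    using C AE_comp_on_A1[OF assms(1) C]
  proof eventually_elim
    case (elim x)
    have "\<bar>indicator (A1 A T) x * g (T x)\<bar> \<le> \<bar>C\<bar>"
      using elim by (auto simp: indicator_def A1_def)
    moreover have "\<bar>\<alpha> * (indicator A x * g x)\<bar> \<le> \<bar>\<alpha>\<bar> * \<bar>C\<bar>"
      using elim by (auto simp: indicator_def abs_mult intro!: mult_left_mono)
    ultimately show ?case
      unfolding k_def by (smt (verit) abs_triangle_ineq4)
  qed
  ultimately have "integrable M (\<lambda>x. k x * (indicator A x * f x))"
    by (rule integrable_bounded_mult[OF fA])
  moreover have "k x * (indicator A x * f x)
      = indicator A x * ((indicator (A1 A T) x * g (T x) - \<alpha> * g x) * f x)" for x
    by (auto simp: k_def indicator_def A1_def)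
  ultimately show ?thesis by (simp add: set_integrable_def)
qed

lemma set_integral_Mstar_mult_Fn:
  assumes "open_dyn_system M A T" and "\<forall>j\<in>{1..n}. Linf_on M A (\<psi> j)"
    and "f \<in> Fn M A T \<psi> n \<alpha>" and "lam 0 = 0"
  shows "set_integrable M A (\<lambda>x. Mstar A T \<psi> n \<alpha> lam x * f x)"
    and "(LINT x:A|M. Mstar A T \<psi> n \<alpha> lam x * f x) = 0"
proof -
  define h where "h j x = (indicator (A1 A T) x * \<psi> j (T x) - \<alpha> * \<psi> j x) * f x" for j x
  have "set_integrable M A f"
    and moments: "\<forall>j\<in>{1..n}. (LINT x:A|M. h j x) = 0"
    using assms(3) unfolding Fn_def h_def by auto
  then have h: "set_integrable M A (h j)" if "j \<in> {1..n}" for j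
    unfolding h_def using set_integrable_moment[OF assms(1)] assms(2) that by blast
  have Mstar_f: "Mstar A T \<psi> n \<alpha> lam x * f x = (\<Sum>j=1..n. lam j * h j x)" for x
    unfolding Mstar_def h_def using assms(4)
    by (simp add: sum_distrib_left sum_distrib_right sum_subtractf right_diff_distrib mult_ac)
  have indicator_Mstar_f: "indicator A x * (Mstar A T \<psi> n \<alpha> lam x * f x)
      = (\<Sum>j=1..n. lam j * (indicator A x * h j x))" for x
    unfolding Mstar_f by (simp add: sum_distrib_left mult.left_commute)
  have hA: "integrable M (\<lambda>x. lam j * (indicator A x * h j x))" if "j \<in> {1..n}" for j
    using h[OF that] by (simp add: set_integrable_def)
  then have "integrable M (\<lambda>x. \<Sum>j=1..n. lam j * (indicator A x * h j x))"
    by (rule Bochner_Integration.integrable_sum)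
  then show "set_integrable M A (\<lambda>x. Mstar A T \<psi> n \<alpha> lam x * f x)"
    by (simp add: set_integrable_def indicator_Mstar_f)
  have "(LINT x:A|M. Mstar A T \<psi> n \<alpha> lam x * f x)
      = (\<integral>x. (\<Sum>j=1..n. lam j * (indicator A x * h j x)) \<partial>M)"
    by (simp add: set_lebesgue_integral_def indicator_Mstar_f)
  also have "\<dots> = (\<Sum>j=1..n. lam j * (LINT x:A|M. h j x))"
    by (subst Bochner_Integration.integral_sum[OF hA]) (simp_all add: set_lebesgue_integral_def)
  also have "\<dots> = 0"
    using moments by simp
  finally show "(LINT x:A|M. Mstar A T \<psi> n \<alpha> lam x * f x) = 0" .
qed

lemma Fn_vanishes_on_Mstar_support:
  assumes "open_dyn_system M A T" and "\<forall>j\<in>{1..n}. Linf_on M A (\<psi> j)"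
    and "f \<in> Fn M A T \<psi> n \<alpha>"
    and "lam 0 = 0" and "AE x in M. x \<in> A \<longrightarrow> Mstar A T \<psi> n \<alpha> lam x \<le> 0"
  shows "AE x in M. x \<in> A \<and> Mstar A T \<psi> n \<alpha> lam x \<noteq> 0 \<longrightarrow> f x = 0"
proof -
  define G where "G x = indicator A x * (Mstar A T \<psi> n \<alpha> lam x * f x)" for x
  have f_nonneg: "AE x in M. x \<in> A \<longrightarrow> 0 \<le> f x"
    using assms(3) unfolding Fn_def by auto
  have "integrable M G" and "integral\<^sup>L M G = 0"
    using set_integral_Mstar_mult_Fn[where lam=lam, OF assms(1-4)]
    unfolding G_def set_integrable_def set_lebesgue_integral_def by simp_all
  moreover have "AE x in M. 0 \<le> - G x"
    using assms(5) f_nonneg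
    by eventually_elim (auto simp: G_def indicator_def mult_nonpos_nonneg)
  ultimately have "AE x in M. - G x = 0"
    using integral_nonneg_eq_0_iff_AE[of M "\<lambda>x. - G x"] by simp
  then show ?thesis
    by eventually_elim (auto simp: G_def)
qed

lemma sum_apply: "(\<Sum>b\<in>B. F b) x = (\<Sum>b\<in>B. F b x :: 'c::comm_monoid_add)"
  by (induction B rule: infinite_finite_induct) auto

interpretation real_seq: vector_space "\<lambda>(c::real) (lam::nat \<Rightarrow> real) j. c * lam j"
  by unfold_locales (auto simp: algebra_simps fun_eq_iff)

lemma finite_spanning_subset:
  assumes "\<forall>lam\<in>C. \<forall>j>n. lam j = 0"
  obtains B where "finite B" "B \<subseteq> C" "C \<subseteq> real_seq.span B"
proof -
  obtain B where B: "B \<subseteq> C" "real_seq.independent B" "C \<subseteq> real_seq.span B"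
    using real_seq.maximal_independent_subset by blast
  define E where "E = (\<lambda>i j. if j = i then 1 else (0::real)) ` {0..n}"
  have "C \<subseteq> real_seq.span E"
  proof
    fix lam assume "lam \<in> C"
    then have "lam = (\<Sum>i\<in>{0..n}. (\<lambda>j. lam i * (if j = i then 1 else 0)))"
      using assms by (auto simp: fun_eq_iff sum_apply if_distrib sum.delta' cong: if_cong)
    also have "\<dots> \<in> real_seq.span E"
      unfolding E_def by (intro real_seq.span_sum real_seq.span_scale real_seq.span_base) auto
    finally show "lam \<in> real_seq.span E" .
  qed
  then have "finite B"
    using real_seq.independent_span_bound[of E B] B unfolding E_def by auto
  with B that show ?thesis by blast
qed

lemma Mstar_eq_0_on_span:
  assumes "lam \<in> real_seq.span B" and "\<forall>b\<in>B. Mstar A T \<psi> n \<alpha> b x = 0"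
  shows "Mstar A T \<psi> n \<alpha> lam x = 0"
proof -
  have add: "Mstar A T \<psi> n \<alpha> (lam + mu) x = Mstar A T \<psi> n \<alpha> lam x + Mstar A T \<psi> n \<alpha> mu x"
    for lam mu :: "nat \<Rightarrow> real"
    unfolding Mstar_def plus_fun_def distrib_right sum.distrib by (simp only: add_ac)
  have scale: "Mstar A T \<psi> n \<alpha> (\<lambda>j. c * lam j) x = c * Mstar A T \<psi> n \<alpha> lam x" for c lam
    unfolding Mstar_def distrib_left sum_distrib_left by (simp only: mult.assoc)
  have "real_seq.subspace {lam. Mstar A T \<psi> n \<alpha> lam x = 0}"
    by (rule real_seq.subspaceI) (auto simp: add scale, simp add: Mstar_def)
  then have "real_seq.span B \<subseteq> {lam. Mstar A T \<psi> n \<alpha> lam x = 0}"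
    using assms(2) by (intro real_seq.span_minimal) auto
  then show ?thesis
    using assms(1) by blast
qed

lemma Mstar_truncate:
  "Mstar A T \<psi> n \<alpha> (\<lambda>j. if j \<le> n then lam j else 0) x = Mstar A T \<psi> n \<alpha> lam x"
  unfolding Mstar_def by (auto intro!: sum.cong)

lemma reduced_domain_finite_multipliers:
  obtains B where "finite B"
    and "\<forall>b\<in>B. b 0 = 0 \<and> (AE x in M. x \<in> A \<longrightarrow> Mstar A T \<psi> n \<alpha> b x \<le> 0)"
    and "reduced_domain M A T \<psi> n \<alpha> = A - (\<Union>b\<in>B. {x \<in> A. Mstar A T \<psi> n \<alpha> b x \<noteq> 0})"
proof -
  define C where "C = {lam. lam 0 = 0 \<and> (\<forall>j>n. lam j = 0) \<and>
    (AE x in M. x \<in> A \<longrightarrow> Mstar A T \<psi> n \<alpha> lam x \<le> 0)}"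
  obtain B where B: "finite B" "B \<subseteq> C" "C \<subseteq> real_seq.span B"
    by (rule finite_spanning_subset[of C n]) (auto simp: C_def)
  have "x \<in> reduced_domain M A T \<psi> n \<alpha>"
    if "x \<in> A" and B_vanish: "\<forall>b\<in>B. Mstar A T \<psi> n \<alpha> b x = 0" for x
  proof -
    have "Mstar A T \<psi> n \<alpha> lam x = 0"
      if "lam 0 = 0" and "AE x in M. x \<in> A \<longrightarrow> Mstar A T \<psi> n \<alpha> lam x \<le> 0" for lam
    proof -
      let ?lam' = "\<lambda>j. if j \<le> n then lam j else 0"
      have "?lam' \<in> real_seq.span B"
        using that B(3) by (auto simp: C_def Mstar_truncate)
      from Mstar_eq_0_on_span[OF this B_vanish] show ?thesis
        by (simp only: Mstar_truncate)
    qed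
    then show ?thesis
      using \<open>x \<in> A\<close> unfolding reduced_domain_def by blast
  qed
  moreover have "x \<in> A \<and> (\<forall>b\<in>B. Mstar A T \<psi> n \<alpha> b x = 0)"
    if "x \<in> reduced_domain M A T \<psi> n \<alpha>" for x
    using that B(2) unfolding reduced_domain_def C_def by blast
  ultimately have "reduced_domain M A T \<psi> n \<alpha> = A - (\<Union>b\<in>B. {x \<in> A. Mstar A T \<psi> n \<alpha> b x \<noteq> 0})"
    by auto
  moreover have "\<forall>b\<in>B. b 0 = 0 \<and> (AE x in M. x \<in> A \<longrightarrow> Mstar A T \<psi> n \<alpha> b x \<le> 0)"
    using B(2) by (auto simp: C_def)
  ultimately show ?thesis
    using that B(1) by blast
qed

theorem lemma5:
  fixes M :: "'a measure" and A :: "'a set" and T :: "'a \<Rightarrow> 'a"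
    and \<psi> :: "nat \<Rightarrow> 'a \<Rightarrow> real" and n :: nat and \<alpha> :: real and f :: "'a \<Rightarrow> real"
  assumes "open_dyn_system M A T"
    and "0 < \<alpha>" and "\<alpha> \<le> 1" and "1 \<le> n"
    and "\<forall>j\<in>{1..n}. Linf_on M A (\<psi> j)"
    and "AE x in M. x \<in> A \<longrightarrow> (\<Sum>j=1..n. \<psi> j x) = 1"
    and "reduced_domain M A T \<psi> n \<alpha> \<in> sets M"
    and "f \<in> Fn M A T \<psi> n \<alpha>"
  shows "AE x in M. x \<in> A \<longrightarrow> f x = f x * indicator (reduced_domain M A T \<psi> n \<alpha>) x"
proof -
  obtain B where B: "finite B"
    "\<forall>b\<in>B. b 0 = 0 \<and> (AE x in M. x \<in> A \<longrightarrow> Mstar A T \<psi> n \<alpha> b x \<le> 0)"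
    "reduced_domain M A T \<psi> n \<alpha> = A - (\<Union>b\<in>B. {x \<in> A. Mstar A T \<psi> n \<alpha> b x \<noteq> 0})"
    by (rule reduced_domain_finite_multipliers)
  have "AE x in M. \<forall>b\<in>B. x \<in> A \<and> Mstar A T \<psi> n \<alpha> b x \<noteq> 0 \<longrightarrow> f x = 0"
    using B(2) Fn_vanishes_on_Mstar_support[OF assms(1,5,8)] by (intro AE_finite_allI[OF B(1)]) blast
  then show ?thesis
    by eventually_elim (auto simp: B(3) indicator_def)
qed

end
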